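(* Let $G$ be a finite undirected graph. Let $K$ be the simplicial complex whose vertices are the nonempty sets $A\subseteq V(G)$ with $N(A)\neq\emptyset$ and $N(N(A))=A$, and whose simplices are the nonempty sets $\{A_1,\dots,A_t\}$ of such vertices with $\bigcap_{i=1}^tA_i\neq\emptyset$ and $N\big(\bigcup_{i=1}^tA_i\big)\neq\emptyset$. Then $K$ collapses onto its subcomplex $\mathcal{L}o(G)$ (the order complex of the vertex set of $K$ ordered by inclusion). (Equivalently, $K$ is the atom crosscut complex of the lattice obtained from the opposite of the face poset of $\mathrm{Hom}(K_2,G)$ by adjoining a minimum and a maximum, with the atom $(A,N(A))$ indexed by $A$.)
   Context: For $S\subseteq V(G)$, $N(S)=\bigcap_{v\in S}N(v)$ is the set of common neighbors of vertices of $S$. The neighborhood complex $\mathcal N(G)$ has simplices the nonempty $S\subseteq V(G)$ with $N(S)\neq\emptyset$; the Lovász complex $\mathcal{L}o(G)$ is the order complex of the poset $\{N(S):S\text{ a simplex of }\mathcal N(G)\}$ ordered by inclusion (this poset equals the vertex set of $K$). $\mathrm{Hom}(K_2,G)$ is the subcomplex of $\Delta^{V(G)}\times\Delta^{V(G)}$ consisting of the cells $\sigma\times\tau$ with $\sigma,\tau$ nonempty subsets of $V(G)$ and $\sigma\times\tau\subseteq E(G)$ (i.e. $(x,y)\in E(G)$ for all $x\in\sigma$, $y\in\tau$). *)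

theory Defs
  imports Main
begin

text \<open>A finite undirected graph: finite vertex set V and a symmetric edge
relation E on V (loops are not excluded).\<close>
definition fin_graph :: "'a set \<Rightarrow> ('a \<Rightarrow> 'a \<Rightarrow> bool) \<Rightarrow> bool" where
  "fin_graph V E \<longleftrightarrow> finite V \<and> (\<forall>x y. E x y \<longrightarrow> x \<in> V \<and> y \<in> V) \<and> (\<forall>x y. E x y \<longrightarrow> E y x)"

definition nbhd :: "'a set \<Rightarrow> ('a \<Rightarrow> 'a \<Rightarrow> bool) \<Rightarrow> 'a set \<Rightarrow> 'a set" where
  "nbhd V E S = {v \<in> V. \<forall>u\<in>S. E u v}"

definition nbhd_complex :: "'a set \<Rightarrow> ('a \<Rightarrow> 'a \<Rightarrow> bool) \<Rightarrow> 'a set set" where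
  "nbhd_complex V E = {S. S \<subseteq> V \<and> S \<noteq> {} \<and> nbhd V E S \<noteq> {}}"

definition lovasz_poset :: "'a set \<Rightarrow> ('a \<Rightarrow> 'a \<Rightarrow> bool) \<Rightarrow> 'a set set" where
  "lovasz_poset V E = nbhd V E ` nbhd_complex V E"

definition order_complex :: "'b set set \<Rightarrow> 'b set set set" where
  "order_complex P = {C. C \<noteq> {} \<and> finite C \<and> C \<subseteq> P \<and>
      (\<forall>A\<in>C. \<forall>B\<in>C. A \<subseteq> B \<or> B \<subseteq> A)}"

definition lovasz_complex :: "'a set \<Rightarrow> ('a \<Rightarrow> 'a \<Rightarrow> bool) \<Rightarrow> 'a set set set" where
  "lovasz_complex V E = order_complex (lovasz_poset V E)"

definition K_vertices :: "'a set \<Rightarrow> ('a \<Rightarrow> 'a \<Rightarrow> bool) \<Rightarrow> 'a set set" where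
  "K_vertices V E = {A. A \<subseteq> V \<and> A \<noteq> {} \<and> nbhd V E A \<noteq> {} \<and> nbhd V E (nbhd V E A) = A}"

definition K_complex :: "'a set \<Rightarrow> ('a \<Rightarrow> 'a \<Rightarrow> bool) \<Rightarrow> 'a set set set" where
  "K_complex V E = {F. F \<noteq> {} \<and> finite F \<and> F \<subseteq> K_vertices V E \<and>
      \<Inter> F \<noteq> {} \<and> nbhd V E (\<Union> F) \<noteq> {}}"

definition elementary_collapse :: "'b set set \<Rightarrow> 'b set set \<Rightarrow> bool" where
  "elementary_collapse K K' \<longleftrightarrow> (\<exists>\<sigma> \<tau>. \<sigma> \<in> K \<and> \<tau> \<in> K \<and> \<sigma> \<subset> \<tau> \<and> finite \<tau> \<and>
      card \<tau> = card \<sigma> + 1 \<and> (\<forall>\<rho>\<in>K. \<sigma> \<subseteq> \<rho> \<longrightarrow> \<rho> = \<sigma> \<or> \<rho> = \<tau>) \<and>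
      K' = K - {\<sigma>, \<tau>})"

definition collapses_onto :: "'b set set \<Rightarrow> 'b set set \<Rightarrow> bool" where
  "collapses_onto K L \<longleftrightarrow> elementary_collapse\<^sup>*\<^sup>* K L"

end

theory Submission
  imports Defs
begin

(* The pivot of a simplex F that is not a chain is the intersection p of those members of F
   that are incomparable with some other member. It is comparable with every member of F, so
   adding or removing p changes neither the incomparable members nor the pivot; in K it is
   moreover a vertex, and F - {p} and F \<union> {p} stay simplices. Thus the non-chains of K are
   matched in pairs F, F \<union> {p} with p \<notin> F. Removing the pairs in order of increasing pivot,
   and for one pivot starting from inclusion-maximal F, is a sequence of elementary collapses,
   since a simplex containing F has a pivot contained in that of F. What remains are the
   chains of vertices, i.e. the Lovasz complex. *)

section \<open>Pivots of families of sets\<close>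

definition incomparable_members :: "'b set set \<Rightarrow> 'b set set" where
  "incomparable_members F = {A \<in> F. \<exists>B\<in>F. \<not> A \<subseteq> B \<and> \<not> B \<subseteq> A}"

definition pivot :: "'b set set \<Rightarrow> 'b set" where
  "pivot F = \<Inter> (incomparable_members F)"

lemma incomparable_members_empty_iff: "incomparable_members F = {} \<longleftrightarrow> chain\<^sub>\<subseteq> F"
  unfolding incomparable_members_def chain_subset_def by blast

lemma incomparable_members_mono: "F \<subseteq> G \<Longrightarrow> incomparable_members F \<subseteq> incomparable_members G"
  unfolding incomparable_members_def by blast

lemma pivot_antimono: "F \<subseteq> G \<Longrightarrow> pivot G \<subseteq> pivot F"
  unfolding pivot_def by (metis Inter_anti_mono incomparable_members_mono)

lemma Inter_subset_pivot: "\<Inter> F \<subseteq> pivot F"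
  unfolding pivot_def incomparable_members_def by blast

lemma pivot_comparable:
  assumes "\<not> chain\<^sub>\<subseteq> F" and "A \<in> F"
  shows "pivot F \<subseteq> A \<or> A \<subseteq> pivot F"
proof (cases "A \<in> incomparable_members F")
  case True
  then show ?thesis unfolding pivot_def by blast
next
  case False
  with \<open>A \<in> F\<close> have comparable: "\<forall>B\<in>F. A \<subseteq> B \<or> B \<subseteq> A"
    unfolding incomparable_members_def by blast
  show ?thesis
  proof (cases "\<exists>B\<in>incomparable_members F. \<not> A \<subseteq> B")
    case True
    then obtain B where "B \<in> incomparable_members F" "B \<subseteq> A"
      using comparable unfolding incomparable_members_def by blast
    then show ?thesis unfolding pivot_def by blast
  next
    case False
    then show ?thesis unfolding pivot_def by blast
  qed
qed

lemma incomparable_members_insert_pivot: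
  assumes "\<not> chain\<^sub>\<subseteq> F"
  shows "incomparable_members (insert (pivot F) F) = incomparable_members F"
  using pivot_comparable[OF assms] unfolding incomparable_members_def by blast

lemma incomparable_members_remove_pivot:
  assumes "\<not> chain\<^sub>\<subseteq> F"
  shows "incomparable_members (F - {pivot F}) = incomparable_members F"
  using pivot_comparable[OF assms] unfolding incomparable_members_def by blast

lemma
  assumes "\<not> chain\<^sub>\<subseteq> F"
  shows not_chain_insert_pivot: "\<not> chain\<^sub>\<subseteq> (insert (pivot F) F)"
    and pivot_insert_pivot: "pivot (insert (pivot F) F) = pivot F"
    and not_chain_remove_pivot: "\<not> chain\<^sub>\<subseteq> (F - {pivot F})"
    and pivot_remove_pivot: "pivot (F - {pivot F}) = pivot F"
  using assms incomparable_members_insert_pivot[OF assms] incomparable_members_remove_pivot[OF assms]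
  by (simp_all add: pivot_def flip: incomparable_members_empty_iff)

section \<open>Collapsing a matching by pivots\<close>

lemma elementary_collapse_free_face:
  assumes "\<sigma> \<in> K" "insert x \<sigma> \<in> K" "x \<notin> \<sigma>" "finite \<sigma>"
    and "\<And>\<rho>. \<rho> \<in> K \<Longrightarrow> \<sigma> \<subseteq> \<rho> \<Longrightarrow> \<rho> = \<sigma> \<or> \<rho> = insert x \<sigma>"
  shows "elementary_collapse K (K - {\<sigma>, insert x \<sigma>})"
  unfolding elementary_collapse_def using assms by (intro exI[of _ \<sigma>] exI[of _ "insert x \<sigma>"]) auto

lemma collapses_onto_remove_cones:
  assumes "finite D" and "\<And>F. F \<in> D \<Longrightarrow> finite F \<and> x \<notin> F"
    and "K \<inter> (D \<union> insert x ` D) = {}"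
    and "\<And>\<rho> F. \<rho> \<in> K \<Longrightarrow> F \<in> D \<Longrightarrow> \<not> F \<subseteq> \<rho>"
  shows "collapses_onto (K \<union> D \<union> insert x ` D) K"
  using assms
proof (induction D rule: finite_remove_induct)
  case empty
  then show ?case unfolding collapses_onto_def by simp
next
  case (remove D)
  have cone: "finite G" "x \<notin> G" if "G \<in> D" for G
    using remove.prems(1) that by auto
  obtain F where "F \<in> D" and maximal: "\<And>G. G \<in> D \<Longrightarrow> F \<subseteq> G \<Longrightarrow> G = F"
    using finite_has_maximal[OF \<open>finite D\<close> \<open>D \<noteq> {}\<close>] by auto
  have "elementary_collapse (K \<union> D \<union> insert x ` D) (K \<union> D \<union> insert x ` D - {F, insert x F})"
  proof (rule elementary_collapse_free_face)
    fix \<rho> assume "\<rho> \<in> K \<union> D \<union> insert x ` D" "F \<subseteq> \<rho>"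
    then show "\<rho> = F \<or> \<rho> = insert x F"
      using remove.prems(3) \<open>F \<in> D\<close> maximal cone(2) by blast
  qed (use \<open>F \<in> D\<close> cone in auto)
  moreover have "K \<union> D \<union> insert x ` D - {F, insert x F} = K \<union> (D - {F}) \<union> insert x ` (D - {F})"
  proof -
    have "inj_on (insert x) D"
      by (rule inj_onI) (metis cone(2) insert_ident)
    then have "insert x ` (D - {F}) = insert x ` D - {insert x F}"
      using \<open>F \<in> D\<close> by (simp add: inj_on_image_set_diff)
    moreover have "F \<notin> K" "insert x F \<notin> K"
      using remove.prems(2) \<open>F \<in> D\<close> by auto
    moreover have "insert x F \<notin> D" "F \<notin> insert x ` D"
      using \<open>F \<in> D\<close> cone(2) by auto
    ultimately show ?thesis by auto
  qed
  moreover have "collapses_onto (K \<union> (D - {F}) \<union> insert x ` (D - {F})) K"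
  proof (rule remove.IH[OF \<open>F \<in> D\<close>])
    show "\<And>G. G \<in> D - {F} \<Longrightarrow> finite G \<and> x \<notin> G" using cone by blast
    show "K \<inter> (D - {F} \<union> insert x ` (D - {F})) = {}" using remove.prems(2) by blast
    show "\<And>\<rho> G. \<rho> \<in> K \<Longrightarrow> G \<in> D - {F} \<Longrightarrow> \<not> G \<subseteq> \<rho>" using remove.prems(3) by blast
  qed
  ultimately show ?case
    unfolding collapses_onto_def by (metis converse_rtranclp_into_rtranclp)
qed

locale pivot_closed_family =
  fixes K :: "'b set set set"
  assumes finite_family: "finite K"
    and finite_members: "F \<in> K \<Longrightarrow> finite F"
    and insert_pivot_closed: "F \<in> K \<Longrightarrow> \<not> chain\<^sub>\<subseteq> F \<Longrightarrow> insert (pivot F) F \<in> K"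
    and remove_pivot_closed: "F \<in> K \<Longrightarrow> \<not> chain\<^sub>\<subseteq> F \<Longrightarrow> F - {pivot F} \<in> K"
begin

definition pivots :: "'b set set" where
  "pivots = pivot ` {F \<in> K. \<not> chain\<^sub>\<subseteq> F}"

definition chains_or_pivot_in :: "'b set set \<Rightarrow> 'b set set set" where
  "chains_or_pivot_in W = {F \<in> K. chain\<^sub>\<subseteq> F \<or> pivot F \<in> W}"

definition pivot_layer :: "'b set \<Rightarrow> 'b set set set" where
  "pivot_layer x = {F \<in> K. \<not> chain\<^sub>\<subseteq> F \<and> pivot F = x \<and> x \<notin> F}"

lemma insert_pivot_layer:
  assumes "F \<in> pivot_layer x"
  shows "insert x F \<in> K" "\<not> chain\<^sub>\<subseteq> (insert x F)" "pivot (insert x F) = x"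
  using assms insert_pivot_closed not_chain_insert_pivot pivot_insert_pivot
  unfolding pivot_layer_def by auto

lemma chains_or_pivot_in_decompose:
  assumes "x \<in> W"
  shows "chains_or_pivot_in W =
    chains_or_pivot_in (W - {x}) \<union> pivot_layer x \<union> insert x ` pivot_layer x"
proof (intro equalityI subsetI)
  fix F assume F: "F \<in> chains_or_pivot_in W"
  show "F \<in> chains_or_pivot_in (W - {x}) \<union> pivot_layer x \<union> insert x ` pivot_layer x"
  proof (cases "F \<in> chains_or_pivot_in (W - {x}) \<or> x \<notin> F")
    case True
    with F show ?thesis unfolding chains_or_pivot_in_def pivot_layer_def by auto
  next
    case False
    with F have "F \<in> K" "\<not> chain\<^sub>\<subseteq> F" "pivot F = x" "x \<in> F"
      unfolding chains_or_pivot_in_def by auto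
    then have "F - {x} \<in> pivot_layer x"
      unfolding pivot_layer_def
      using remove_pivot_closed not_chain_remove_pivot pivot_remove_pivot by auto
    moreover have "F = insert x (F - {x})" using \<open>x \<in> F\<close> by auto
    ultimately show ?thesis by blast
  qed
next
  fix F assume "F \<in> chains_or_pivot_in (W - {x}) \<union> pivot_layer x \<union> insert x ` pivot_layer x"
  then show "F \<in> chains_or_pivot_in W"
    using assms insert_pivot_layer unfolding chains_or_pivot_in_def pivot_layer_def by auto
qed

lemma chains_or_pivot_in_disjoint_layer:
  "chains_or_pivot_in (W - {x}) \<inter> (pivot_layer x \<union> insert x ` pivot_layer x) = {}"
  using insert_pivot_layer unfolding chains_or_pivot_in_def pivot_layer_def by fastforce

lemma pivot_layer_not_below:
  assumes up: "\<And>y z. y \<in> W \<Longrightarrow> z \<in> pivots \<Longrightarrow> y \<subseteq> z \<Longrightarrow> z \<in> W"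
    and "x \<notin> W" "\<rho> \<in> chains_or_pivot_in W" "F \<in> pivot_layer x"
  shows "\<not> F \<subseteq> \<rho>"
proof
  assume "F \<subseteq> \<rho>"
  from \<open>F \<in> pivot_layer x\<close> have F: "F \<in> K" "\<not> chain\<^sub>\<subseteq> F" "pivot F = x"
    unfolding pivot_layer_def by auto
  with \<open>F \<subseteq> \<rho>\<close> have "\<not> chain\<^sub>\<subseteq> \<rho>"
    unfolding chain_subset_def by blast
  with \<open>\<rho> \<in> chains_or_pivot_in W\<close> have "pivot \<rho> \<in> W"
    unfolding chains_or_pivot_in_def by auto
  moreover have "pivot \<rho> \<subseteq> x" using pivot_antimono[OF \<open>F \<subseteq> \<rho>\<close>] F by simp
  moreover have "x \<in> pivots" using F unfolding pivots_def by auto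
  ultimately show False using up \<open>x \<notin> W\<close> by blast
qed

\<comment> \<open>Removing a layer with minimal pivot keeps W upward closed.\<close>
lemma chains_or_pivot_in_collapses_onto_chains:
  assumes "finite W" and "\<And>y z. y \<in> W \<Longrightarrow> z \<in> pivots \<Longrightarrow> y \<subseteq> z \<Longrightarrow> z \<in> W"
  shows "collapses_onto (chains_or_pivot_in W) {F \<in> K. chain\<^sub>\<subseteq> F}"
  using assms
proof (induction W rule: finite_remove_induct)
  case empty
  then show ?case unfolding collapses_onto_def chains_or_pivot_in_def by simp
next
  case (remove W)
  obtain x where "x \<in> W" and minimal: "\<And>y. y \<in> W \<Longrightarrow> y \<subseteq> x \<Longrightarrow> y = x"
    using finite_has_minimal[OF \<open>finite W\<close> \<open>W \<noteq> {}\<close>] by blast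
  have up: "z \<in> W - {x}" if "y \<in> W - {x}" "z \<in> pivots" "y \<subseteq> z" for y z
    using that remove.prems minimal by blast
  have "collapses_onto (chains_or_pivot_in W) (chains_or_pivot_in (W - {x}))"
    unfolding chains_or_pivot_in_decompose[OF \<open>x \<in> W\<close>]
  proof (rule collapses_onto_remove_cones)
    show "finite (pivot_layer x)"
      using finite_family unfolding pivot_layer_def by simp
    show "\<And>F. F \<in> pivot_layer x \<Longrightarrow> finite F \<and> x \<notin> F"
      using finite_members unfolding pivot_layer_def by simp
    show "\<not> F \<subseteq> \<rho>" if "\<rho> \<in> chains_or_pivot_in (W - {x})" "F \<in> pivot_layer x" for \<rho> F
      using pivot_layer_not_below[OF up _ that] by simp
  qed (rule chains_or_pivot_in_disjoint_layer)
  moreover have "collapses_onto (chains_or_pivot_in (W - {x})) {F \<in> K. chain\<^sub>\<subseteq> F}"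
    by (rule remove.IH[OF \<open>x \<in> W\<close> up])
  ultimately show ?case unfolding collapses_onto_def by (rule rtranclp_trans)
qed

theorem collapses_onto_chains: "collapses_onto K {F \<in> K. chain\<^sub>\<subseteq> F}"
proof -
  have "chains_or_pivot_in pivots = K"
    unfolding chains_or_pivot_in_def pivots_def by auto
  moreover have "finite pivots"
    using finite_family unfolding pivots_def by simp
  ultimately show ?thesis
    using chains_or_pivot_in_collapses_onto_chains[of pivots] by simp
qed

end

section \<open>Closed sets of the neighbourhood operator\<close>

lemma nbhd_antimono: "S \<subseteq> T \<Longrightarrow> nbhd V E T \<subseteq> nbhd V E S"
  unfolding nbhd_def by auto

lemma nbhd_subset: "nbhd V E S \<subseteq> V"
  unfolding nbhd_def by auto

lemma subset_nbhd_nbhd: "fin_graph V E \<Longrightarrow> S \<subseteq> V \<Longrightarrow> S \<subseteq> nbhd V E (nbhd V E S)"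
  unfolding fin_graph_def nbhd_def by auto

lemma nbhd_nbhd_nbhd: "fin_graph V E \<Longrightarrow> S \<subseteq> V \<Longrightarrow> nbhd V E (nbhd V E (nbhd V E S)) = nbhd V E S"
  by (meson nbhd_antimono subset_nbhd_nbhd nbhd_subset subset_antisym)

lemma nbhd_nbhd_Inter_subset:
  assumes "\<And>A. A \<in> \<A> \<Longrightarrow> nbhd V E (nbhd V E A) = A"
  shows "nbhd V E (nbhd V E (\<Inter> \<A>)) \<subseteq> \<Inter> \<A>"
proof (rule Inter_greatest)
  fix A assume "A \<in> \<A>"
  then have "nbhd V E (nbhd V E (\<Inter> \<A>)) \<subseteq> nbhd V E (nbhd V E A)"
    by (intro nbhd_antimono) auto
  with assms \<open>A \<in> \<A>\<close> show "nbhd V E (nbhd V E (\<Inter> \<A>)) \<subseteq> A" by simp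
qed

lemma lovasz_poset_eq_K_vertices:
  assumes "fin_graph V E"
  shows "lovasz_poset V E = K_vertices V E"
proof (intro equalityI subsetI)
  fix A assume "A \<in> lovasz_poset V E"
  then obtain S where S: "S \<subseteq> V" "S \<noteq> {}" "nbhd V E S \<noteq> {}" "A = nbhd V E S"
    unfolding lovasz_poset_def nbhd_complex_def by auto
  then have "S \<subseteq> nbhd V E A" using subset_nbhd_nbhd[OF assms] by simp
  then have "nbhd V E A \<noteq> {}" using \<open>S \<noteq> {}\<close> by blast
  moreover have "nbhd V E (nbhd V E A) = A" using nbhd_nbhd_nbhd[OF assms \<open>S \<subseteq> V\<close>] S(4) by simp
  ultimately show "A \<in> K_vertices V E"
    unfolding K_vertices_def using S(3,4) nbhd_subset[of V E S] by auto
next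
  fix A assume A: "A \<in> K_vertices V E"
  then have "nbhd V E A \<in> nbhd_complex V E"
    unfolding K_vertices_def nbhd_complex_def using nbhd_subset[of V E A] by auto
  moreover have "A = nbhd V E (nbhd V E A)" using A unfolding K_vertices_def by auto
  ultimately show "A \<in> lovasz_poset V E" unfolding lovasz_poset_def by auto
qed

lemma pivot_in_K_vertices:
  assumes "fin_graph V E" "F \<in> K_complex V E" "\<not> chain\<^sub>\<subseteq> F"
  shows "pivot F \<in> K_vertices V E"
proof -
  from assms(2) have F: "F \<subseteq> K_vertices V E" "\<Inter> F \<noteq> {}"
    unfolding K_complex_def by auto
  obtain A where "A \<in> incomparable_members F"
    using assms(3) incomparable_members_empty_iff by blast
  then have "A \<in> K_vertices V E" "pivot F \<subseteq> A"
    using F unfolding pivot_def incomparable_members_def by auto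
  then have "pivot F \<subseteq> V" "nbhd V E (pivot F) \<noteq> {}"
    using nbhd_antimono[of "pivot F" A V E] unfolding K_vertices_def by auto
  moreover have "pivot F \<noteq> {}" using F Inter_subset_pivot[of F] by auto
  moreover have "nbhd V E (nbhd V E (pivot F)) = pivot F"
    using nbhd_nbhd_Inter_subset[of "incomparable_members F" V E] F(1)
      subset_nbhd_nbhd[OF assms(1) \<open>pivot F \<subseteq> V\<close>]
    unfolding pivot_def incomparable_members_def K_vertices_def by blast
  ultimately show ?thesis unfolding K_vertices_def by auto
qed

lemma K_complex_insert_pivot:
  assumes "fin_graph V E" "F \<in> K_complex V E" "\<not> chain\<^sub>\<subseteq> F"
  shows "insert (pivot F) F \<in> K_complex V E"
proof -
  obtain A where "A \<in> F" "pivot F \<subseteq> A"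
    using assms(3) incomparable_members_empty_iff unfolding pivot_def incomparable_members_def
    by blast
  then have "\<Union> (insert (pivot F) F) = \<Union> F" by auto
  moreover have "\<Inter> (insert (pivot F) F) = \<Inter> F" using Inter_subset_pivot[of F] by auto
  ultimately show ?thesis
    using assms pivot_in_K_vertices[OF assms] unfolding K_complex_def by auto
qed

lemma K_complex_remove_pivot:
  assumes "F \<in> K_complex V E" "\<not> chain\<^sub>\<subseteq> F"
  shows "F - {pivot F} \<in> K_complex V E"
proof -
  have "F - {pivot F} \<noteq> {}"
    using not_chain_remove_pivot[OF assms(2)] by (auto simp: chain_subset_def)
  moreover have "\<Inter> F \<subseteq> \<Inter> (F - {pivot F})" by auto
  moreover have "nbhd V E (\<Union> F) \<subseteq> nbhd V E (\<Union> (F - {pivot F}))" by (intro nbhd_antimono) auto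
  ultimately show ?thesis using assms(1) unfolding K_complex_def by auto
qed

lemma finite_K_complex: "fin_graph V E \<Longrightarrow> finite (K_complex V E)"
proof -
  assume "fin_graph V E"
  then have "finite (Pow (Pow V))" unfolding fin_graph_def by simp
  moreover have "K_complex V E \<subseteq> Pow (Pow V)"
    unfolding K_complex_def K_vertices_def by auto
  ultimately show ?thesis by (rule finite_subset[rotated])
qed

lemma pivot_closed_family_K_complex:
  assumes "fin_graph V E"
  shows "pivot_closed_family (K_complex V E)"
proof
  show "finite (K_complex V E)" using finite_K_complex[OF assms] .
  show "finite F" if "F \<in> K_complex V E" for F
    using that unfolding K_complex_def by simp
  show "insert (pivot F) F \<in> K_complex V E" if "F \<in> K_complex V E" "\<not> chain\<^sub>\<subseteq> F" for F
    using K_complex_insert_pivot[OF assms that] .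
  show "F - {pivot F} \<in> K_complex V E" if "F \<in> K_complex V E" "\<not> chain\<^sub>\<subseteq> F" for F
    using K_complex_remove_pivot[OF that] .
qed

lemma lovasz_complex_eq_chains:
  assumes "fin_graph V E"
  shows "lovasz_complex V E = {F \<in> K_complex V E. chain\<^sub>\<subseteq> F}"
proof (intro equalityI subsetI)
  fix C assume "C \<in> lovasz_complex V E"
  then have C: "C \<noteq> {}" "finite C" "C \<subseteq> K_vertices V E" "chain\<^sub>\<subseteq> C"
    unfolding lovasz_complex_def lovasz_poset_eq_K_vertices[OF assms] order_complex_def
      chain_subset_def by auto
  then have "\<Inter> C \<in> C" "\<Union> C \<in> C"
    using Inter_in_chain Union_in_chain by (metis chain_subset_alt_def)+
  with C show "C \<in> {F \<in> K_complex V E. chain\<^sub>\<subseteq> F}"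
    unfolding K_complex_def K_vertices_def by auto
next
  fix C assume "C \<in> {F \<in> K_complex V E. chain\<^sub>\<subseteq> F}"
  then show "C \<in> lovasz_complex V E"
    unfolding lovasz_complex_def lovasz_poset_eq_K_vertices[OF assms] order_complex_def
      K_complex_def chain_subset_def by blast
qed

theorem mainTheorem7:
  fixes V :: "'a set" and E :: "'a \<Rightarrow> 'a \<Rightarrow> bool"
  assumes "fin_graph V E"
  shows "collapses_onto (K_complex V E) (lovasz_complex V E)"
  using pivot_closed_family.collapses_onto_chains[OF pivot_closed_family_K_complex[OF assms]]
  unfolding lovasz_complex_eq_chains[OF assms] .

end
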